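(* Let $G=(V,E)$ be a connected almost bipartite permutation graph. Then every hole in $G$ is a dominating set of $G$ (every vertex of $G$ lies on the hole or has a neighbor on it).
   Context: All graphs are finite, simple, undirected. A hole is an induced cycle on at least five vertices. $K_3$ is the triangle and $C_k$ the cycle on $k$ vertices. $T_2$ is the tree on 7 vertices obtained from the claw $K_{1,3}$ by subdividing each of its three edges once. $X_2$ is the 7-vertex graph obtained from a 4-cycle by attaching one new pendant vertex to each of three of its four vertices. $X_3$ is the 7-vertex graph obtained from the domino (two 4-cycles sharing exactly one edge, 6 vertices) by attaching one new pendant vertex to one endpoint of the shared edge. A graph is an almost bipartite permutation graph if it contains none of $T_2, X_2, X_3, K_3, C_5, C_6, C_7, C_8, C_9$ as an induced subgraph. *)

theory Defs
  imports Main
begin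

definition simple_graph :: "'a set \<Rightarrow> ('a \<Rightarrow> 'a \<Rightarrow> bool) \<Rightarrow> bool" where
  "simple_graph V E \<longleftrightarrow> finite V \<and> (\<forall>x y. E x y \<longrightarrow> x \<in> V \<and> y \<in> V)
     \<and> (\<forall>x y. E x y \<longrightarrow> E y x) \<and> (\<forall>x. \<not> E x x)"

definition connected_graph :: "'a set \<Rightarrow> ('a \<Rightarrow> 'a \<Rightarrow> bool) \<Rightarrow> bool" where
  "connected_graph V E \<longleftrightarrow> V \<noteq> {} \<and> (\<forall>x\<in>V. \<forall>y\<in>V. E\<^sup>*\<^sup>* x y)"

definition induced_emb :: "'a set \<Rightarrow> ('a \<Rightarrow> 'a \<Rightarrow> bool) \<Rightarrow> 'b set \<Rightarrow> ('b \<Rightarrow> 'b \<Rightarrow> bool) \<Rightarrow> ('b \<Rightarrow> 'a) \<Rightarrow> bool" where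
  "induced_emb V E W F f \<longleftrightarrow> inj_on f W \<and> f ` W \<subseteq> V \<and>
     (\<forall>x\<in>W. \<forall>y\<in>W. E (f x) (f y) \<longleftrightarrow> F x y)"

definition contains_induced :: "'a set \<Rightarrow> ('a \<Rightarrow> 'a \<Rightarrow> bool) \<Rightarrow> 'b set \<Rightarrow> ('b \<Rightarrow> 'b \<Rightarrow> bool) \<Rightarrow> bool" where
  "contains_induced V E W F \<longleftrightarrow> (\<exists>f. induced_emb V E W F f)"

definition cycle_adj :: "nat \<Rightarrow> nat \<Rightarrow> nat \<Rightarrow> bool" where
  "cycle_adj k i j \<longleftrightarrow> i \<noteq> j \<and> (j = Suc i mod k \<or> i = Suc j mod k)"

definition adj_of :: "(nat \<times> nat) set \<Rightarrow> nat \<Rightarrow> nat \<Rightarrow> bool" where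
  "adj_of S x y \<longleftrightarrow> (x, y) \<in> S \<or> (y, x) \<in> S"

text \<open>T2: claw with centre 0, leaves 1,2,3 each subdivided (by 4,5,6).\<close>
definition T2_adj :: "nat \<Rightarrow> nat \<Rightarrow> bool" where
  "T2_adj = adj_of {(0,1),(0,2),(0,3),(1,4),(2,5),(3,6)}"

text \<open>X2: 4-cycle 0-1-2-3-0 with pendants 4,5,6 at 0,1,2.\<close>
definition X2_adj :: "nat \<Rightarrow> nat \<Rightarrow> bool" where
  "X2_adj = adj_of {(0,1),(1,2),(2,3),(3,0),(0,4),(1,5),(2,6)}"

text \<open>X3: domino = 4-cycles 0-1-4-3-0 and 1-2-5-4-1 sharing edge 1-4,
  plus pendant 6 at 1.\<close>
definition X3_adj :: "nat \<Rightarrow> nat \<Rightarrow> bool" where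
  "X3_adj = adj_of {(0,1),(1,2),(3,4),(4,5),(0,3),(1,4),(2,5),(1,6)}"

definition almost_bipartite_permutation_graph :: "'a set \<Rightarrow> ('a \<Rightarrow> 'a \<Rightarrow> bool) \<Rightarrow> bool" where
  "almost_bipartite_permutation_graph V E \<longleftrightarrow>
     \<not> contains_induced V E {0..<7::nat} T2_adj \<and>
     \<not> contains_induced V E {0..<7::nat} X2_adj \<and>
     \<not> contains_induced V E {0..<7::nat} X3_adj \<and>
     (\<forall>k\<in>{3,5,6,7,8,9}. \<not> contains_induced V E {0..<k::nat} (cycle_adj k))"

definition is_hole :: "'a set \<Rightarrow> ('a \<Rightarrow> 'a \<Rightarrow> bool) \<Rightarrow> 'a set \<Rightarrow> bool" where
  "is_hole V E H \<longleftrightarrow> (\<exists>k\<ge>5. \<exists>f. induced_emb V E {0..<k} (cycle_adj k) f \<and> f ` {0..<k} = H)"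

definition dominating :: "'a set \<Rightarrow> ('a \<Rightarrow> 'a \<Rightarrow> bool) \<Rightarrow> 'a set \<Rightarrow> bool" where
  "dominating V E D \<longleftrightarrow> D \<subseteq> V \<and> (\<forall>v\<in>V. v \<in> D \<or> (\<exists>u\<in>D. E v u))"

end

theory Submission
  imports Defs
begin

text \<open>
  A hole has length at least 6, since there is no induced \<open>C\<^sub>5\<close>. If it did not
  dominate, connectivity would give an edge \<open>w u\<close> with \<open>u\<close> adjacent to a hole
  vertex \<open>h\<^sub>i\<close> and \<open>w\<close> neither on nor adjacent to the hole. Since the graph is
  triangle-free, \<open>u\<close> sees neither \<open>h\<^sub>i\<^sub>-\<^sub>1\<close> nor \<open>h\<^sub>i\<^sub>+\<^sub>1\<close>. If \<open>u\<close> also sees \<open>h\<^sub>i\<^sub>+\<^sub>2\<close>,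
  the 4-cycle \<open>u h\<^sub>i h\<^sub>i\<^sub>+\<^sub>1 h\<^sub>i\<^sub>+\<^sub>2\<close> with pendants \<open>w\<close>, \<open>h\<^sub>i\<^sub>-\<^sub>1\<close>, \<open>h\<^sub>i\<^sub>+\<^sub>3\<close> is an induced \<open>X\<^sub>2\<close>,
  and symmetrically for \<open>h\<^sub>i\<^sub>-\<^sub>2\<close>; otherwise the claw centred at \<open>h\<^sub>i\<close> with legs
  \<open>h\<^sub>i\<^sub>-\<^sub>1 h\<^sub>i\<^sub>-\<^sub>2\<close>, \<open>h\<^sub>i\<^sub>+\<^sub>1 h\<^sub>i\<^sub>+\<^sub>2\<close>, \<open>u w\<close> is an induced \<open>T\<^sub>2\<close>. All of these configurations
  live on five consecutive hole vertices, which form an induced path.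
\<close>

definition triangle_free :: "('a \<Rightarrow> 'a \<Rightarrow> bool) \<Rightarrow> bool" where
  "triangle_free E \<longleftrightarrow> (\<forall>a b c. E a b \<longrightarrow> E b c \<longrightarrow> \<not> E a c)"

definition path_adj :: "nat \<Rightarrow> nat \<Rightarrow> bool" where
  "path_adj i j \<longleftrightarrow> j = Suc i \<or> i = Suc j"

lemma all_less_numeral: "(\<forall>x<numeral n. P x) \<longleftrightarrow> (\<forall>x<pred_numeral n. P x) \<and> P (pred_numeral n)"
  by (simp add: numeral_eq_Suc All_less_Suc conj_commute)

lemma contains_induced_listI:
  assumes "distinct xs" "set xs \<subseteq> V" "length xs = n"
    and "\<forall>a<n. \<forall>b<n. E (xs ! a) (xs ! b) \<longleftrightarrow> F a b"
  shows "contains_induced V E {0..<n} F"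
  unfolding contains_induced_def induced_emb_def
proof (intro exI[of _ "(!) xs"] conjI)
  show "inj_on ((!) xs) {0..<n}"
    using assms(1,3) by (auto simp: inj_on_def nth_eq_iff_index_eq)
qed (use assms in auto)

lemma add_mod_cancel_left: "(s + x) mod k = (s + y) mod k \<longleftrightarrow> x mod k = y mod (k::nat)"
  by (simp add: nat_mod_eq_iff)

lemma cycle_adj_rotate:
  assumes "a < k" "b < k"
  shows "cycle_adj k ((s + a) mod k) ((s + b) mod k) \<longleftrightarrow> cycle_adj k a b"
proof -
  have succ: "(s + y) mod k = Suc ((s + x) mod k) mod k \<longleftrightarrow> y = Suc x mod k" if "y < k" for x y
    using add_mod_cancel_left[of s y k "Suc x"] that by (simp add: mod_Suc_eq)
  show ?thesis
    using succ[OF assms(1)] succ[OF assms(2)] add_mod_cancel_left[of s a k b] assms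
    unfolding cycle_adj_def by simp
qed

lemma cycle_adj_eq_path_adj:
  assumes "Suc a < k" "Suc b < k"
  shows "cycle_adj k a b \<longleftrightarrow> path_adj a b"
  using assms unfolding cycle_adj_def path_adj_def by auto

lemma induced_embD:
  assumes "induced_emb V E W F f" "x \<in> W" "y \<in> W"
  shows "E (f x) (f y) \<longleftrightarrow> F x y" "f x = f y \<longleftrightarrow> x = y"
  using assms unfolding induced_emb_def inj_on_def by blast+

lemma induced_emb_vertex:
  assumes "induced_emb V E W F f" "x \<in> W"
  shows "f x \<in> V"
  using assms unfolding induced_emb_def by blast

lemma induced_path_in_cycle:
  assumes cycle: "induced_emb V E {0..<k} (cycle_adj k) f" and "m < k"
  shows "induced_emb V E {0..<m} path_adj (\<lambda>j. f ((s + j) mod k))"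
  unfolding induced_emb_def
proof (intro conjI ballI)
  have mod_in: "(s + j) mod k \<in> {0..<k}" for j
    using \<open>m < k\<close> by simp
  show "inj_on (\<lambda>j. f ((s + j) mod k)) {0..<m}"
    using induced_embD(2)[OF cycle mod_in mod_in] add_mod_cancel_left[of s _ k] \<open>m < k\<close>
    by (auto simp: inj_on_def)
  show "(\<lambda>j. f ((s + j) mod k)) ` {0..<m} \<subseteq> V"
    using induced_emb_vertex[OF cycle mod_in] by blast
  fix x y assume "x \<in> {0..<m}" "y \<in> {0..<m}"
  then have "E (f ((s + x) mod k)) (f ((s + y) mod k)) \<longleftrightarrow> cycle_adj k x y"
    using induced_embD(1)[OF cycle mod_in mod_in] cycle_adj_rotate[of x k y s] \<open>m < k\<close> by simp
  also have "\<dots> \<longleftrightarrow> path_adj x y"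
    using \<open>x \<in> {0..<m}\<close> \<open>y \<in> {0..<m}\<close> \<open>m < k\<close> by (intro cycle_adj_eq_path_adj) auto
  finally show "E (f ((s + x) mod k)) (f ((s + y) mod k)) \<longleftrightarrow> path_adj x y" .
qed

lemma simple_graphD:
  assumes "simple_graph V E"
  shows "E x y \<longleftrightarrow> E y x" "\<not> E x x" "E x y \<Longrightarrow> x \<in> V \<and> y \<in> V"
  using assms unfolding simple_graph_def by blast+

lemma triangle_free_if_no_K3:
  assumes "simple_graph V E" "\<not> contains_induced V E {0..<3} (cycle_adj 3)"
  shows "triangle_free E"
  unfolding triangle_free_def
proof (intro allI impI notI)
  fix a b c assume "E a b" "E b c" "E a c"
  then have "contains_induced V E {0..<3} (cycle_adj 3)"
    using simple_graphD(1,2)[OF assms(1)] simple_graphD(3)[OF assms(1) \<open>E a c\<close>]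
      simple_graphD(3)[OF assms(1) \<open>E b c\<close>]
    by (intro contains_induced_listI[of "[a, b, c]"])
      (auto simp: all_less_numeral cycle_adj_def)
  with assms(2) show False by contradiction
qed

lemma induced_emb_path5D:
  assumes "induced_emb V E {0..<5} path_adj p"
  shows "E (p 0) (p 1)" "E (p 1) (p 2)" "E (p 2) (p 3)" "E (p 3) (p 4)"
    "\<not> E (p 0) (p 2)" "\<not> E (p 0) (p 3)" "\<not> E (p 0) (p 4)"
    "\<not> E (p 1) (p 3)" "\<not> E (p 1) (p 4)" "\<not> E (p 2) (p 4)"
    "distinct [p 0, p 1, p 2, p 3, p 4]" "set [p 0, p 1, p 2, p 3, p 4] \<subseteq> V"
  using induced_embD[OF assms] induced_emb_vertex[OF assms] by (simp_all add: path_adj_def)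

lemma contains_X2_of_path:
  assumes "simple_graph V E" "triangle_free E"
    and p: "induced_emb V E {0..<5} path_adj p"
    and "E w u" "E u (p 1)" "E u (p 3)"
    and "\<forall>j<5. w \<noteq> p j \<and> \<not> E w (p j)"
  shows "contains_induced V E {0..<7} X2_adj"
proof -
  note sym = simple_graphD(1)[OF assms(1)] and irr = simple_graphD(2)[OF assms(1)]
    and inV = simple_graphD(3)[OF assms(1)] and path = induced_emb_path5D[OF p]
  have "\<not> E u (p 0)" "\<not> E u (p 2)" "\<not> E u (p 4)"
    using assms(2,5,6) path sym unfolding triangle_free_def by metis+
  moreover have "distinct [p 1, u, p 3, p 2, p 0, w, p 4]"
    using path(11) assms(4,7) irr by (auto simp: all_less_numeral)
  ultimately show ?thesis
    using assms(4-7) path inV[of w u] sym irr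
    by (intro contains_induced_listI[of "[p 1, u, p 3, p 2, p 0, w, p 4]"])
      (simp_all add: all_less_numeral X2_adj_def adj_of_def)
qed

lemma contains_T2_of_path:
  assumes "simple_graph V E" "triangle_free E"
    and p: "induced_emb V E {0..<5} path_adj p"
    and "E w u" "E u (p 2)" "\<not> E u (p 0)" "\<not> E u (p 4)"
    and "\<forall>j<5. w \<noteq> p j \<and> \<not> E w (p j)"
  shows "contains_induced V E {0..<7} T2_adj"
proof -
  note sym = simple_graphD(1)[OF assms(1)] and irr = simple_graphD(2)[OF assms(1)]
    and inV = simple_graphD(3)[OF assms(1)] and path = induced_emb_path5D[OF p]
  have "\<not> E u (p 1)" "\<not> E u (p 3)"
    using assms(2,5) path sym unfolding triangle_free_def by metis+
  moreover have "distinct [p 2, p 1, p 3, u, p 0, p 4, w]"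
    using path(11) assms(4,8) irr by (auto simp: all_less_numeral)
  ultimately show ?thesis
    using assms(4-8) path inV[of w u] sym irr
    by (intro contains_induced_listI[of "[p 2, p 1, p 3, u, p 0, p 4, w]"])
      (simp_all add: all_less_numeral T2_adj_def adj_of_def)
qed

lemma edge_leaving_closed_neighbourhood:
  assumes "connected_graph V E" "D \<subseteq> V" "D \<noteq> {}" "\<not> dominating V E D"
  obtains w u where "E w u" "w \<notin> D" "\<forall>x\<in>D. \<not> E w x" "\<exists>x\<in>D. E u x"
proof -
  define N where "N = {y. y \<in> D \<or> (\<exists>x\<in>D. E y x)}"
  obtain v where "v \<in> V" "v \<notin> N"
    using assms(2,4) unfolding dominating_def N_def by blast
  moreover obtain d where "d \<in> D" using assms(3) by blast
  ultimately have "E\<^sup>*\<^sup>* v d" "v \<notin> N" "d \<in> N"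
    using assms(1,2) unfolding connected_graph_def N_def by auto
  then have "\<exists>w u. E w u \<and> w \<notin> N \<and> u \<in> N"
    by (induction rule: converse_rtranclp_induct) auto
  then show ?thesis
    using that unfolding N_def by blast
qed

lemma long_hole_no_vertex_at_distance_two:
  assumes "simple_graph V E" "triangle_free E"
    and "\<not> contains_induced V E {0..<7} X2_adj" "\<not> contains_induced V E {0..<7} T2_adj"
    and hole: "induced_emb V E {0..<k} (cycle_adj k) f" "6 \<le> k"
    and "i < k" "E u (f i)" "E w u"
    and far: "\<forall>j<k. w \<noteq> f j \<and> \<not> E w (f j)"
  shows False
proof -
  define seg where "seg s j = f ((s + j) mod k)" for s j
  have path: "induced_emb V E {0..<5} path_adj (seg s)" for s
    using induced_path_in_cycle[OF hole(1)] hole(2) unfolding seg_def by simp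
  have seg_far: "\<forall>j<5. w \<noteq> seg s j \<and> \<not> E w (seg s j)" for s
    using far hole(2) unfolding seg_def by simp
  define a where "a = i + k - 3"
  \<comment> \<open>the windows \<open>seg a\<close>, \<open>seg (a + 1)\<close>, \<open>seg (a + 2)\<close> contain \<open>f i\<close> at positions 3, 2, 1\<close>
  have "f i = seg a 3"
    using \<open>i < k\<close> hole(2) unfolding a_def seg_def by simp
  have overlap: "seg (a + 1) 2 = seg a 3" "seg (a + 2) 1 = seg a 3"
    "seg (a + 1) 0 = seg a 1" "seg (a + 1) 4 = seg (a + 2) 3"
    unfolding seg_def by (simp_all add: eval_nat_numeral)
  have u: "E u (seg a 3)" "E u (seg (a + 1) 2)" "E u (seg (a + 2) 1)"
    using \<open>f i = seg a 3\<close> \<open>E u (f i)\<close> overlap by simp_all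
  consider "E u (seg (a + 2) 3)" | "E u (seg a 1)"
    | "\<not> E u (seg (a + 1) 4)" "\<not> E u (seg (a + 1) 0)"
    using overlap by metis
  then show False
  proof cases
    case 1
    from contains_X2_of_path[OF assms(1,2) path \<open>E w u\<close> u(3) 1 seg_far] assms(3) show False
      by contradiction
  next
    case 2
    from contains_X2_of_path[OF assms(1,2) path \<open>E w u\<close> 2 u(1) seg_far] assms(3) show False
      by contradiction
  next
    case 3
    from contains_T2_of_path[OF assms(1,2) path \<open>E w u\<close> u(2) 3(2,1) seg_far] assms(4) show False
      by contradiction
  qed
qed

theorem proposition3p3:
  fixes V :: "'a set" and E :: "'a \<Rightarrow> 'a \<Rightarrow> bool" and H :: "'a set"
  assumes "simple_graph V E"
    and "connected_graph V E"
    and "almost_bipartite_permutation_graph V E"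
    and "is_hole V E H"
  shows "dominating V E H"
proof (rule ccontr)
  assume "\<not> dominating V E H"
  have forbidden: "\<not> contains_induced V E {0..<3} (cycle_adj 3)"
    "\<not> contains_induced V E {0..<5} (cycle_adj 5)"
    "\<not> contains_induced V E {0..<7} X2_adj" "\<not> contains_induced V E {0..<7} T2_adj"
    using assms(3) unfolding almost_bipartite_permutation_graph_def by simp_all
  obtain k f where "5 \<le> k" and hole: "induced_emb V E {0..<k} (cycle_adj k) f"
    and H: "H = f ` {0..<k}"
    using assms(4) unfolding is_hole_def by metis
  moreover have "k \<noteq> 5"
    using forbidden(2) hole unfolding contains_induced_def by auto
  ultimately have "6 \<le> k" by simp
  have "H \<subseteq> V" "H \<noteq> {}"
    using hole H \<open>6 \<le> k\<close> unfolding induced_emb_def by auto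
  then obtain w u where "E w u" "w \<notin> H" "\<forall>x\<in>H. \<not> E w x" "\<exists>x\<in>H. E u x"
    using edge_leaving_closed_neighbourhood[OF assms(2) _ _ \<open>\<not> dominating V E H\<close>] by blast
  moreover from this obtain i where "i < k" "E u (f i)"
    unfolding H by auto
  moreover have "\<forall>j<k. w \<noteq> f j \<and> \<not> E w (f j)"
    using \<open>w \<notin> H\<close> \<open>\<forall>x\<in>H. \<not> E w x\<close> unfolding H by auto
  ultimately show False
    using long_hole_no_vertex_at_distance_two[OF assms(1) _ forbidden(3,4) hole \<open>6 \<le> k\<close>]
      triangle_free_if_no_K3[OF assms(1) forbidden(1)] by blast
qed

end
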